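(* Let $V$ be a vector space of dimension $n$ over a field, and let $g_1,\dots,g_{n+1}\in\mathrm{GL}(V)$ satisfy $\operatorname{rank}(g_i-1)\le 1$ for all $i$ and $g_1\cdots g_{n+1}=\mu\cdot\mathrm{id}_V$ for a scalar $\mu$. If $\mu\ne 1$ and $\mu$ is not an eigenvalue of any $g_i$, then each $g_i$ is a pseudoreflection and the group generated by $g_1,\dots,g_{n+1}$ acts irreducibly on $V$.
   Context: An element $g\in\mathrm{GL}(V)$ is a pseudoreflection if $\operatorname{rank}(g-1)=1$. *)

theory Defs
  imports "Jordan_Normal_Form.DL_Rank" "Jordan_Normal_Form.Char_Poly"
begin

text \<open>V is modelled as K^n (column vectors of dimension n over a field K),
  elements of GL(V) as invertible n x n matrices.\<close>

definition mat_list_prod :: "nat \<Rightarrow> 'a :: semiring_1 mat list \<Rightarrow> 'a mat" where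
  "mat_list_prod n gs = foldr (\<lambda>A B. A * B) gs (1\<^sub>m n)"

definition pseudoreflection :: "nat \<Rightarrow> 'a :: field mat \<Rightarrow> bool" where
  "pseudoreflection n g \<longleftrightarrow> g \<in> carrier_mat n n \<and> invertible_mat g
     \<and> vec_space.rank n (g - 1\<^sub>m n) = 1"

inductive_set gen_mat_group :: "nat \<Rightarrow> 'a :: semiring_1 mat set \<Rightarrow> 'a mat set"
  for n :: nat and S :: "'a mat set" where
  gen_one: "1\<^sub>m n \<in> gen_mat_group n S"
| gen_gen: "g \<in> S \<Longrightarrow> g \<in> gen_mat_group n S"
| gen_inv: "g \<in> S \<Longrightarrow> h \<in> carrier_mat n n \<Longrightarrow> g * h = 1\<^sub>m n \<Longrightarrow> h \<in> gen_mat_group n S"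
| gen_mult: "a \<in> gen_mat_group n S \<Longrightarrow> b \<in> gen_mat_group n S \<Longrightarrow> a * b \<in> gen_mat_group n S"

definition vec_subspace :: "nat \<Rightarrow> 'a :: field vec set \<Rightarrow> bool" where
  "vec_subspace n W \<longleftrightarrow> W \<subseteq> carrier_vec n \<and> 0\<^sub>v n \<in> W
     \<and> (\<forall>v\<in>W. \<forall>w\<in>W. v + w \<in> W) \<and> (\<forall>c. \<forall>v\<in>W. c \<cdot>\<^sub>v v \<in> W)"

definition acts_irreducibly :: "nat \<Rightarrow> 'a :: field mat set \<Rightarrow> bool" where
  "acts_irreducibly n G \<longleftrightarrow> n > 0 \<and>
     (\<forall>W. vec_subspace n W \<and> (\<forall>g\<in>G. \<forall>w\<in>W. g *\<^sub>v w \<in> W)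
        \<longrightarrow> W = {0\<^sub>v n} \<or> W = carrier_vec n)"

end

theory Submission
  imports Defs "Jordan_Normal_Form.DL_Rank_Submatrix"
begin

(* Write g_i = 1 + u_i psi_i^T. If a nonzero v were fixed by every g_i except g_j, then
   g_j v = mu v, because the product of all g_i is the scalar mu; the same holds for the
   transposes g_i^T = 1 + psi_i u_i^T. Hence no g_i is the identity (otherwise the n - 1 forms
   psi_l, l <> i, j, have a common nonzero zero, fixed by every g_l with l <> j), and any n of
   the u_i are linearly independent. An invariant subspace W contains u_i unless psi_i vanishes
   on W. If W is nonzero and proper, some u_r lies in W and some u_j does not; n - 1 linear
   conditions on a combination of the u_i, i <> j, then produce a nonzero w in W fixed by
   every g_i with i <> r, a contradiction. *)

section \<open>Determinants and inverses\<close>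

lemma invertible_mat_det_nonzero:
  assumes "(A :: 'a :: comm_ring_1 mat) \<in> carrier_mat n n" and "invertible_mat A"
  shows "det A \<noteq> 0"
proof
  obtain B where AB: "A * B = 1\<^sub>m n" and BA: "B * A = 1\<^sub>m (dim_row B)"
    using assms unfolding invertible_mat_def inverts_mat_def by auto
  have "B \<in> carrier_mat n n"
    using arg_cong[OF AB, of dim_col] arg_cong[OF BA, of dim_col] assms(1) by auto
  then have "det A * det B = 1" using AB assms(1) by (simp flip: det_mult)
  moreover assume "det A = 0"
  ultimately show False by simp
qed

lemma det_nonzero_imp_inverse_mat:
  assumes "A \<in> carrier_mat n n" and "det A \<noteq> (0 :: 'a :: field)"
  obtains B where "B \<in> carrier_mat n n" and "A * B = 1\<^sub>m n" and "B * A = 1\<^sub>m n"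
  using det_non_zero_imp_unit[OF assms, of undefined] unfolding Units_def ring_mat_simps by auto

lemma det_nonzero_mult_mat_vec_cancel:
  assumes A: "A \<in> carrier_mat n n" "det A \<noteq> (0 :: 'a :: field)"
    and xy: "x \<in> carrier_vec n" "y \<in> carrier_vec n" and eq: "A *\<^sub>v x = A *\<^sub>v y"
  shows "x = y"
proof -
  obtain B where B: "B \<in> carrier_mat n n" and BA: "B * A = 1\<^sub>m n"
    using det_nonzero_imp_inverse_mat[OF A] by metis
  have "x = (B * A) *\<^sub>v x" using BA xy by simp
  also have "\<dots> = (B * A) *\<^sub>v y" using assoc_mult_mat_vec[OF B A(1)] xy eq by simp
  finally show ?thesis using BA xy by simp
qed

lemma det_nonzero_mult_mat_vec_surj:
  assumes A: "A \<in> carrier_mat n n" "det A \<noteq> (0 :: 'a :: field)" and y: "y \<in> carrier_vec n"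
  obtains x where "x \<in> carrier_vec n" and "A *\<^sub>v x = y"
proof -
  obtain B where B: "B \<in> carrier_mat n n" and AB: "A * B = 1\<^sub>m n"
    using det_nonzero_imp_inverse_mat[OF A] by metis
  show ?thesis
  proof
    show "A *\<^sub>v (B *\<^sub>v y) = y" using assoc_mult_mat_vec[OF A(1) B y, symmetric] AB y by simp
  qed (use B y in simp)
qed

lemma eigenvalue_transpose:
  "(A :: 'a :: field mat) \<in> carrier_mat n n \<Longrightarrow> eigenvalue (transpose_mat A) k = eigenvalue A k"
  by (simp add: eigenvalue_root_char_poly[of _ n] char_poly_transpose_mat)

lemma mult_mat_vec_eq_plus_minus_one:
  fixes A :: "'a :: comm_ring_1 mat"
  assumes A: "A \<in> carrier_mat n n" and x: "x \<in> carrier_vec n"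
  shows "A *\<^sub>v x = x + (A - 1\<^sub>m n) *\<^sub>v x"
proof -
  have "(A - 1\<^sub>m n) *\<^sub>v x = A *\<^sub>v x - x"
    using minus_mult_distrib_mat_vec[OF A _ x] x by simp
  then show ?thesis using A x by (auto intro!: eq_vecI)
qed

section \<open>Ordered products of matrices\<close>

lemma mat_list_prod_Nil [simp]: "mat_list_prod n [] = 1\<^sub>m n"
  and mat_list_prod_Cons [simp]: "mat_list_prod n (A # As) = A * mat_list_prod n As"
  by (simp_all add: mat_list_prod_def)

lemma mat_list_prod_carrier:
  "set As \<subseteq> carrier_mat n n \<Longrightarrow> mat_list_prod n As \<in> carrier_mat n n"
  by (induct As) auto

lemma mat_list_prod_append:
  assumes "set As \<subseteq> carrier_mat n n" and "set Bs \<subseteq> carrier_mat n n"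
  shows "mat_list_prod n (As @ Bs) = mat_list_prod n As * mat_list_prod n Bs"
  using assms
proof (induct As)
  case Nil
  then show ?case using mat_list_prod_carrier[of Bs n] by simp
next
  case (Cons A As)
  then show ?case
    using mat_list_prod_carrier[of As n] mat_list_prod_carrier[of Bs n]
    by (simp add: assoc_mult_mat[of A n n "mat_list_prod n As" n "mat_list_prod n Bs" n])
qed

lemma mat_list_prod_mult_fixed_vec:
  assumes "set As \<subseteq> carrier_mat n n" and "v \<in> carrier_vec n" and "\<forall>A\<in>set As. A *\<^sub>v v = v"
  shows "mat_list_prod n As *\<^sub>v v = v"
  using assms
proof (induct As)
  case (Cons A As)
  then show ?case
    using mat_list_prod_carrier[of As n]
    by (simp add: assoc_mult_mat_vec[of A n n "mat_list_prod n As" n])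
qed simp

lemma det_mat_list_prod:
  "set As \<subseteq> carrier_mat n n \<Longrightarrow> det (mat_list_prod n As) = (\<Prod>A\<leftarrow>As. det A)"
  by (induct As) (auto simp: det_mult mat_list_prod_carrier)

lemma mat_list_prod_transpose:
  fixes As :: "'a :: comm_semiring_1 mat list"
  assumes "set As \<subseteq> carrier_mat n n"
  shows "mat_list_prod n (rev (map transpose_mat As)) = transpose_mat (mat_list_prod n As)"
  using assms
proof (induct As)
  case (Cons A As)
  then have A: "A \<in> carrier_mat n n" and As: "set As \<subseteq> carrier_mat n n" by auto
  have "mat_list_prod n (rev (map transpose_mat (A # As)))
      = mat_list_prod n (rev (map transpose_mat As)) * mat_list_prod n [transpose_mat A]"
    using A As mat_list_prod_append[of "rev (map transpose_mat As)" n "[transpose_mat A]"]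
    by (auto simp: image_subset_iff)
  also have "\<dots> = transpose_mat (A * mat_list_prod n As)"
    using Cons.hyps A As transpose_mult[OF A mat_list_prod_carrier[OF As]] by simp
  finally show ?case by simp
qed simp

lemma mat_list_prod_scalar_fixed_but_one:
  fixes As :: "'a :: field mat list"
  assumes carrier: "set (As @ B # Cs) \<subseteq> carrier_mat n n"
    and det: "\<forall>A\<in>set As. det A \<noteq> 0"
    and prod: "mat_list_prod n (As @ B # Cs) = \<mu> \<cdot>\<^sub>m 1\<^sub>m n"
    and v: "v \<in> carrier_vec n" and fixed: "\<forall>A\<in>set As \<union> set Cs. A *\<^sub>v v = v"
  shows "B *\<^sub>v v = \<mu> \<cdot>\<^sub>v v"
proof -
  define P where "P = mat_list_prod n As"
  have P: "P \<in> carrier_mat n n" and B: "B \<in> carrier_mat n n"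
    using carrier mat_list_prod_carrier[of As n] unfolding P_def by auto
  have Pv: "P *\<^sub>v v = v" and Cv: "mat_list_prod n Cs *\<^sub>v v = v"
    using carrier v fixed by (auto simp: P_def intro!: mat_list_prod_mult_fixed_vec)
  have "mat_list_prod n (As @ B # Cs) *\<^sub>v v = P *\<^sub>v (B *\<^sub>v (mat_list_prod n Cs *\<^sub>v v))"
    using carrier P B v mat_list_prod_carrier[of Cs n]
    by (simp add: mat_list_prod_append P_def assoc_mult_mat_vec[of _ n n _ n])
  then have "P *\<^sub>v (B *\<^sub>v v) = mat_list_prod n (As @ B # Cs) *\<^sub>v v"
    using Cv by simp
  also have "\<dots> = P *\<^sub>v (\<mu> \<cdot>\<^sub>v v)"
    using prod v Pv mult_mat_vec[OF P v] by auto
  finally have "P *\<^sub>v (B *\<^sub>v v) = P *\<^sub>v (\<mu> \<cdot>\<^sub>v v)" .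
  moreover have "det P \<noteq> 0"
    using carrier det unfolding P_def by (simp add: det_mat_list_prod image_iff)
  ultimately show ?thesis
    using det_nonzero_mult_mat_vec_cancel[OF P] B v by simp
qed

lemma set_take_drop_Suc_subset_nth:
  "set (take j xs) \<union> set (drop (Suc j) xs) \<subseteq> {xs ! i |i. i < length xs \<and> i \<noteq> j}"
proof -
  have "\<exists>i<length xs. i \<noteq> j \<and> x = xs ! i" if "x \<in> set (take j xs) \<union> set (drop (Suc j) xs)" for x
    using that
  proof
    assume "x \<in> set (take j xs)"
    then obtain k where "k < j" "k < length xs" "x = xs ! k" by (auto simp: in_set_conv_nth)
    then show ?thesis by auto
  next
    assume "x \<in> set (drop (Suc j) xs)"
    then obtain k where "k < length (drop (Suc j) xs)" "x = drop (Suc j) xs ! k"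
      by (metis in_set_conv_nth)
    then show ?thesis by (intro exI[of _ "Suc j + k"]) auto
  qed
  then show ?thesis by blast
qed

lemma mat_list_prod_scalar_fixed_but_nth:
  fixes As :: "'a :: field mat list"
  assumes carrier: "set As \<subseteq> carrier_mat n n" and det: "\<forall>A\<in>set As. det A \<noteq> 0"
    and prod: "mat_list_prod n As = \<mu> \<cdot>\<^sub>m 1\<^sub>m n"
    and j: "j < length As" and v: "v \<in> carrier_vec n"
    and fixed: "\<forall>i<length As. i \<noteq> j \<longrightarrow> As ! i *\<^sub>v v = v"
  shows "As ! j *\<^sub>v v = \<mu> \<cdot>\<^sub>v v"
proof (rule mat_list_prod_scalar_fixed_but_one)
  have split: "As = take j As @ As ! j # drop (Suc j) As" using id_take_nth_drop[OF j] .
  show "set (take j As @ As ! j # drop (Suc j) As) \<subseteq> carrier_mat n n"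
    and "mat_list_prod n (take j As @ As ! j # drop (Suc j) As) = \<mu> \<cdot>\<^sub>m 1\<^sub>m n"
    using carrier prod split[symmetric] by auto
  show "\<forall>A\<in>set (take j As). det A \<noteq> 0" using det by (auto dest: in_set_takeD)
  show "\<forall>A\<in>set (take j As) \<union> set (drop (Suc j) As). A *\<^sub>v v = v"
    using set_take_drop_Suc_subset_nth[of j As] fixed by blast
qed (rule v)

lemma mat_list_prod_scalar_transpose_fixed_but_nth:
  fixes As :: "'a :: field mat list"
  assumes carrier: "set As \<subseteq> carrier_mat n n" and det: "\<forall>A\<in>set As. det A \<noteq> 0"
    and prod: "mat_list_prod n As = \<mu> \<cdot>\<^sub>m 1\<^sub>m n"
    and j: "j < length As" and v: "v \<in> carrier_vec n"
    and fixed: "\<forall>i<length As. i \<noteq> j \<longrightarrow> transpose_mat (As ! i) *\<^sub>v v = v"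
  shows "transpose_mat (As ! j) *\<^sub>v v = \<mu> \<cdot>\<^sub>v v"
proof (rule mat_list_prod_scalar_fixed_but_one)
  let ?Ts = "\<lambda>Bs. rev (map transpose_mat Bs)"
  have split: "?Ts As = ?Ts (drop (Suc j) As) @ transpose_mat (As ! j) # ?Ts (take j As)"
    using arg_cong[OF id_take_nth_drop[OF j], of ?Ts] by simp
  show "set (?Ts (drop (Suc j) As) @ transpose_mat (As ! j) # ?Ts (take j As)) \<subseteq> carrier_mat n n"
    using carrier split[symmetric] by auto
  show "mat_list_prod n (?Ts (drop (Suc j) As) @ transpose_mat (As ! j) # ?Ts (take j As))
      = \<mu> \<cdot>\<^sub>m 1\<^sub>m n"
    using mat_list_prod_transpose[OF carrier] prod split by auto
  show "\<forall>A\<in>set (?Ts (drop (Suc j) As)). det A \<noteq> 0"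
    using carrier det by (auto dest!: in_set_dropD simp: det_transpose)
  show "\<forall>A\<in>set (?Ts (drop (Suc j) As)) \<union> set (?Ts (take j As)). A *\<^sub>v v = v"
    using set_take_drop_Suc_subset_nth[of j As] fixed by auto
qed (rule v)

section \<open>Matrices of rank at most one\<close>

definition outer_prod_mat :: "'a :: times vec \<Rightarrow> 'a vec \<Rightarrow> 'a mat" where
  "outer_prod_mat u v = mat (dim_vec u) (dim_vec v) (\<lambda>(i, j). u $ i * v $ j)"

lemma outer_prod_mat_carrier [simp]:
  "u \<in> carrier_vec n \<Longrightarrow> v \<in> carrier_vec m \<Longrightarrow> outer_prod_mat u v \<in> carrier_mat n m"
  by (simp add: outer_prod_mat_def)

lemma outer_prod_mat_mult_vec:
  fixes u v x :: "'a :: comm_semiring_0 vec"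
  assumes "v \<in> carrier_vec n" and "x \<in> carrier_vec n"
  shows "outer_prod_mat u v *\<^sub>v x = (v \<bullet> x) \<cdot>\<^sub>v u"
  using assms
  by (auto intro!: eq_vecI
      simp: outer_prod_mat_def scalar_prod_def row_def sum_distrib_left ac_simps)

lemma transpose_outer_prod_mat:
  "transpose_mat (outer_prod_mat u (v :: 'a :: comm_semiring_0 vec)) = outer_prod_mat v u"
  by (auto intro!: eq_matI simp: outer_prod_mat_def mult.commute)

lemma det_2x2:
  assumes A: "A \<in> carrier_mat 2 2"
  shows "det A = A $$ (0, 0) * A $$ (1, 1) - A $$ (0, 1) * A $$ (1, 0)"
proof -
  have "det A = (\<Sum>i<2. A $$ (i, 0) * cofactor A i 0)"
    by (rule laplace_expansion_column[OF A]) auto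
  also have "\<dots> = A $$ (0, 0) * cofactor A 0 0 + A $$ (1, 0) * cofactor A 1 0"
    by (simp add: numeral_2_eq_2)
  also have "cofactor A 0 0 = A $$ (1, 1)"
    unfolding cofactor_def using A by (subst det_single) (auto simp: mat_delete_def)
  also have "cofactor A 1 0 = - A $$ (0, 1)"
    unfolding cofactor_def using A by (subst det_single) (auto simp: mat_delete_def)
  finally show ?thesis by (simp add: algebra_simps)
qed

lemma nonzero_mat_obtain_entry:
  assumes "A \<in> carrier_mat n nc" and "A \<noteq> 0\<^sub>m n nc"
  obtains r c where "r < n" "c < nc" "A $$ (r, c) \<noteq> 0"
  using assms by (metis carrier_matD eq_matI index_zero_mat)

lemma rank_ge_1_if_entry_nonzero:
  fixes A :: "'a :: field mat"
  assumes A: "A \<in> carrier_mat n nc" and rc: "r < n" "c < nc" and nz: "A $$ (r, c) \<noteq> 0"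
  shows "1 \<le> vec_space.rank n A"
proof -
  let ?S = "submatrix A {r} {c}"
  have rows: "{i. i < dim_row A \<and> i \<in> {r}} = {r}" and cols: "{j. j < dim_col A \<and> j \<in> {c}} = {c}"
    using A rc by auto
  have S: "?S \<in> carrier_mat 1 1"
    by (rule carrier_matI) (simp_all only: dim_submatrix rows cols, simp_all)
  have empty: "{a \<in> {r}. a < r} = {}" "{a \<in> {c}. a < c} = {}" by auto
  have "?S $$ (0, 0) = A $$ (r, c)"
    using submatrix_index_card[of r A c "{r}" "{c}"] A rc unfolding empty by simp
  then have "det ?S \<noteq> 0" using det_single[OF S] nz by simp
  moreover have "{j. j < nc \<and> j \<in> {c}} = {c}" using rc by auto
  ultimately show ?thesis using vec_space.rank_gt_minor[OF A] by fastforce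
qed

lemma rank_ge_1_if_nonzero:
  fixes A :: "'a :: field mat"
  assumes "A \<in> carrier_mat n nc" and "A \<noteq> 0\<^sub>m n nc"
  shows "1 \<le> vec_space.rank n A"
  using assms by (metis nonzero_mat_obtain_entry rank_ge_1_if_entry_nonzero)

lemma rank_ge_2_if_ordered_minor_nonzero:
  fixes A :: "'a :: field mat"
  assumes A: "A \<in> carrier_mat n nc" and lt: "r < r'" "r' < n" "c < c'" "c' < nc"
    and nz: "A $$ (r, c) * A $$ (r', c') \<noteq> A $$ (r, c') * A $$ (r', c)"
  shows "2 \<le> vec_space.rank n A"
proof -
  let ?I = "{r, r'}" and ?J = "{c, c'}"
  let ?S = "submatrix A ?I ?J"
  have rows: "{i. i < dim_row A \<and> i \<in> ?I} = ?I" and cols: "{j. j < dim_col A \<and> j \<in> ?J} = ?J"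
    using A lt by auto
  have S: "?S \<in> carrier_mat 2 2"
    by (rule carrier_matI) (simp_all only: dim_submatrix rows cols, use lt in simp_all)
  have below: "{a \<in> ?I. a < r} = {}" "{a \<in> ?I. a < r'} = {r}"
    "{a \<in> ?J. a < c} = {}" "{a \<in> ?J. a < c'} = {c}"
    using lt by auto
  have "?S $$ (0, 0) = A $$ (r, c)" "?S $$ (0, 1) = A $$ (r, c')"
    "?S $$ (1, 0) = A $$ (r', c)" "?S $$ (1, 1) = A $$ (r', c')"
    using submatrix_index_card[of r A c ?I ?J] submatrix_index_card[of r A c' ?I ?J]
      submatrix_index_card[of r' A c ?I ?J] submatrix_index_card[of r' A c' ?I ?J] A lt
    unfolding below by simp_all
  then have "det ?S \<noteq> 0" using det_2x2[OF S] nz by simp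
  from vec_space.rank_gt_minor[OF A this] show ?thesis using A lt cols by simp
qed

lemma rank_ge_2_if_minor_nonzero:
  fixes A :: "'a :: field mat"
  assumes A: "A \<in> carrier_mat n nc" and rows: "r \<noteq> r'" "r < n" "r' < n"
    and cols: "c \<noteq> c'" "c < nc" "c' < nc"
    and nz: "A $$ (r, c) * A $$ (r', c') \<noteq> A $$ (r, c') * A $$ (r', c)"
  shows "2 \<le> vec_space.rank n A"
proof -
  have "A $$ (min r r', min c c') * A $$ (max r r', max c c')
      \<noteq> A $$ (min r r', max c c') * A $$ (max r r', min c c')"
    using rows(1) cols(1) nz by (cases "r < r'"; cases "c < c'") (simp_all add: mult.commute)
  then show ?thesis
    using rank_ge_2_if_ordered_minor_nonzero[OF A, of "min r r'" "max r r'" "min c c'" "max c c'"]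
      rows cols by simp
qed

lemma rank_le_1_imp_outer_prod_mat:
  fixes A :: "'a :: field mat"
  assumes A: "A \<in> carrier_mat n nc" and rank: "vec_space.rank n A \<le> 1"
  obtains u v where "u \<in> carrier_vec n" "v \<in> carrier_vec nc" "A = outer_prod_mat u v"
proof (cases "A = 0\<^sub>m n nc")
  case True
  then show ?thesis
    by (intro that[of "0\<^sub>v n" "0\<^sub>v nc"]) (auto intro!: eq_matI simp: outer_prod_mat_def)
next
  case False
  then obtain r0 c0 where rc0: "r0 < n" "c0 < nc" "A $$ (r0, c0) \<noteq> 0"
    using nonzero_mat_obtain_entry[OF A] by blast
  define a where "a = A $$ (r0, c0)"
  have minor: "A $$ (r, c) * a = A $$ (r, c0) * A $$ (r0, c)" if "r < n" "c < nc" for r c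
    using rank_ge_2_if_minor_nonzero[OF A, of r r0 c c0] rank that rc0
    by (cases "r = r0 \<or> c = c0") (auto simp: a_def mult.commute)
  show ?thesis
  proof (rule that)
    show "col A c0 \<in> carrier_vec n" and "vec nc (\<lambda>c. A $$ (r0, c) / a) \<in> carrier_vec nc"
      using A by auto
    show "A = outer_prod_mat (col A c0) (vec nc (\<lambda>c. A $$ (r0, c) / a))"
      using A minor rc0 by (auto intro!: eq_matI simp: outer_prod_mat_def a_def field_simps)
  qed
qed

section \<open>Linear conditions and subspaces\<close>

lemma exists_nonzero_orthogonal_vec:
  fixes f :: "'b \<Rightarrow> 'a :: field vec"
  assumes I: "finite I" "card I < n" and f: "f ` I \<subseteq> carrier_vec n"
  obtains v where "v \<in> carrier_vec n" "v \<noteq> 0\<^sub>v n" "\<forall>i\<in>I. f i \<bullet> v = 0"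
proof -
  obtain h where h: "bij_betw h {0..<card I} I" using ex_bij_betw_nat_finite[OF I(1)] by blast
  define rows where "rows k = (if k < card I then f (h k) else 0\<^sub>v n)" for k
  have rows: "rows \<in> {0..<n} \<rightarrow> carrier_vec n"
    using f bij_betwE[OF h] by (auto simp: rows_def image_subset_iff)
  define M where "M = mat\<^sub>r n n (\<lambda>k. if k = n - 1 then 0\<^sub>v n else rows k)"
  have M: "M \<in> carrier_mat n n" by (simp add: M_def)
  have "det M = 0" unfolding M_def using I by (intro det_row_0[OF _ rows]) auto
  then obtain v where v: "v \<in> carrier_vec n" "v \<noteq> 0\<^sub>v n" "M *\<^sub>v v = 0\<^sub>v n"
    using det_0_iff_vec_prod_zero_field[OF M] by blast
  have "f i \<bullet> v = 0" if "i \<in> I" for i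
  proof -
    obtain k where k: "k < card I" "i = h k" using bij_betw_imp_surj_on[OF h] \<open>i \<in> I\<close> by force
    moreover have "dim_vec (f i) = n" using f \<open>i \<in> I\<close> by auto
    ultimately have "(M *\<^sub>v v) $ k = f i \<bullet> v"
      using I by (simp add: M_def rows_def)
    then show ?thesis using v k I by simp
  qed
  with v show ?thesis using that by blast
qed

lemma vec_subspace_mult_mat_vec:
  assumes W: "vec_subspace n W" and U: "U \<in> carrier_mat n m" and c: "c \<in> carrier_vec m"
    and cols: "\<forall>q<m. c $ q \<noteq> 0 \<longrightarrow> col U q \<in> W"
  shows "U *\<^sub>v c \<in> W"
proof -
  define partial where "partial k = vec n (\<lambda>i. \<Sum>q<k. U $$ (i, q) * c $ q)" for k
  have "partial k \<in> W" if "k \<le> m" for k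
    using that
  proof (induct k)
    case 0
    have "partial 0 = 0\<^sub>v n" by (auto simp: partial_def)
    then show ?case using W by (simp add: vec_subspace_def)
  next
    case (Suc k)
    have "partial (Suc k) = partial k + c $ k \<cdot>\<^sub>v col U k"
      using U Suc.prems by (auto intro!: eq_vecI simp: partial_def)
    moreover have "c $ k \<cdot>\<^sub>v col U k \<in> W"
    proof (cases "c $ k = 0")
      case True
      then have "c $ k \<cdot>\<^sub>v col U k = 0\<^sub>v n" using U by (auto intro!: eq_vecI)
      then show ?thesis using W by (simp add: vec_subspace_def)
    next
      case False
      then show ?thesis using cols Suc.prems W by (simp add: vec_subspace_def)
    qed
    ultimately show ?case using Suc W by (simp add: vec_subspace_def)
  qed
  moreover have "partial m = U *\<^sub>v c"
    using U c by (auto intro!: eq_vecI simp: partial_def scalar_prod_def row_def lessThan_atLeast0)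
  ultimately show ?thesis by (metis order_refl)
qed

section \<open>Rank-one perturbations of the identity with scalar product\<close>

locale scalar_rank_one_product =
  fixes n :: nat and gs :: "'a :: field mat list" and \<mu> :: 'a and u \<psi> :: "nat \<Rightarrow> 'a vec"
  assumes dim_pos: "1 \<le> n"
    and length_gs: "length gs = Suc n"
    and gs_carrier: "set gs \<subseteq> carrier_mat n n"
    and gs_det: "\<forall>g\<in>set gs. det g \<noteq> 0"
    and gs_prod: "mat_list_prod n gs = \<mu> \<cdot>\<^sub>m 1\<^sub>m n"
    and gs_no_eigenvalue: "\<forall>g\<in>set gs. \<not> eigenvalue g \<mu>"
    and u_carrier: "\<And>i. i < Suc n \<Longrightarrow> u i \<in> carrier_vec n"
    and \<psi>_carrier: "\<And>i. i < Suc n \<Longrightarrow> \<psi> i \<in> carrier_vec n"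
    and gs_minus_one: "\<And>i. i < Suc n \<Longrightarrow> gs ! i - 1\<^sub>m n = outer_prod_mat (u i) (\<psi> i)"
begin

lemma gs_nth_carrier: "i < Suc n \<Longrightarrow> gs ! i \<in> carrier_mat n n"
  using gs_carrier nth_mem[of i gs] length_gs by auto

lemma gs_mult_vec:
  assumes i: "i < Suc n" and x: "x \<in> carrier_vec n"
  shows "gs ! i *\<^sub>v x = x + (\<psi> i \<bullet> x) \<cdot>\<^sub>v u i"
  using mult_mat_vec_eq_plus_minus_one[OF gs_nth_carrier[OF i] x]
  by (simp add: gs_minus_one[OF i] outer_prod_mat_mult_vec[OF \<psi>_carrier[OF i] x])

lemma transpose_gs_mult_vec:
  assumes i: "i < Suc n" and x: "x \<in> carrier_vec n"
  shows "transpose_mat (gs ! i) *\<^sub>v x = x + (u i \<bullet> x) \<cdot>\<^sub>v \<psi> i"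
proof -
  have "transpose_mat (gs ! i) - 1\<^sub>m n = transpose_mat (gs ! i - 1\<^sub>m n)"
    using gs_nth_carrier[OF i] by (auto intro!: eq_matI)
  then show ?thesis
    using mult_mat_vec_eq_plus_minus_one[of "transpose_mat (gs ! i)" n x] gs_nth_carrier[OF i] x
    by (simp add: gs_minus_one[OF i] transpose_outer_prod_mat
        outer_prod_mat_mult_vec[OF u_carrier[OF i] x])
qed

lemma gs_fixes_orthogonal:
  assumes "i < Suc n" and "x \<in> carrier_vec n" and "\<psi> i \<bullet> x = 0"
  shows "gs ! i *\<^sub>v x = x"
  using assms u_carrier[OF assms(1)] by (auto simp: gs_mult_vec intro!: eq_vecI)

lemma transpose_gs_fixes_orthogonal:
  assumes "i < Suc n" and "x \<in> carrier_vec n" and "u i \<bullet> x = 0"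
  shows "transpose_mat (gs ! i) *\<^sub>v x = x"
  using assms \<psi>_carrier[OF assms(1)] by (auto simp: transpose_gs_mult_vec intro!: eq_vecI)

lemma no_vector_fixed_by_all_but_one:
  assumes j: "j < Suc n" and v: "v \<in> carrier_vec n" "v \<noteq> 0\<^sub>v n"
  shows "\<exists>i<Suc n. i \<noteq> j \<and> gs ! i *\<^sub>v v \<noteq> v"
proof (rule ccontr)
  assume "\<not> ?thesis"
  then have "\<forall>i<length gs. i \<noteq> j \<longrightarrow> gs ! i *\<^sub>v v = v" using length_gs by auto
  then have "gs ! j *\<^sub>v v = \<mu> \<cdot>\<^sub>v v"
    using mat_list_prod_scalar_fixed_but_nth[OF gs_carrier gs_det gs_prod _ v(1)] length_gs j
    by simp
  then have "eigenvalue (gs ! j) \<mu>"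
    using gs_nth_carrier[OF j] v unfolding eigenvalue_def eigenvector_def by auto
  then show False using gs_no_eigenvalue length_gs j by auto
qed

lemma no_vector_fixed_by_all_but_one_transpose:
  assumes j: "j < Suc n" and v: "v \<in> carrier_vec n" "v \<noteq> 0\<^sub>v n"
  shows "\<exists>i<Suc n. i \<noteq> j \<and> transpose_mat (gs ! i) *\<^sub>v v \<noteq> v"
proof (rule ccontr)
  assume "\<not> ?thesis"
  then have "\<forall>i<length gs. i \<noteq> j \<longrightarrow> transpose_mat (gs ! i) *\<^sub>v v = v" using length_gs by auto
  then have "transpose_mat (gs ! j) *\<^sub>v v = \<mu> \<cdot>\<^sub>v v"
    using mat_list_prod_scalar_transpose_fixed_but_nth[OF gs_carrier gs_det gs_prod _ v(1)]
      length_gs j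
    by simp
  then have "eigenvalue (transpose_mat (gs ! j)) \<mu>"
    using gs_nth_carrier[OF j] v unfolding eigenvalue_def eigenvector_def by auto
  then show False
    using gs_no_eigenvalue length_gs j eigenvalue_transpose[OF gs_nth_carrier[OF j]] by auto
qed

lemma gs_minus_one_nonzero:
  assumes i: "i < Suc n"
  shows "gs ! i - 1\<^sub>m n \<noteq> 0\<^sub>m n n"
proof
  assume zero: "gs ! i - 1\<^sub>m n = 0\<^sub>m n n"
  define j where "j = (if i = 0 then 1 else 0 :: nat)"
  have j: "j < Suc n" "j \<noteq> i" using dim_pos by (auto simp: j_def)
  let ?I = "{0..<Suc n} - {i, j}"
  have "card ?I < n" using i j by (simp add: card_Diff_subset)
  moreover have "\<psi> ` ?I \<subseteq> carrier_vec n" using \<psi>_carrier by auto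
  ultimately obtain v where v: "v \<in> carrier_vec n" "v \<noteq> 0\<^sub>v n" "\<forall>l\<in>?I. \<psi> l \<bullet> v = 0"
    using exists_nonzero_orthogonal_vec[of ?I n \<psi>] by blast
  have "gs ! l *\<^sub>v v = v" if "l < Suc n" "l \<noteq> j" for l
  proof (cases "l = i")
    case True
    then show ?thesis
      using mult_mat_vec_eq_plus_minus_one[OF gs_nth_carrier[OF i] v(1)] zero v(1)
      by (auto intro!: eq_vecI)
  next
    case False
    then show ?thesis using gs_fixes_orthogonal[OF that(1) v(1)] v(3) that by simp
  qed
  then show False using no_vector_fixed_by_all_but_one[OF j(1) v(1,2)] by blast
qed

definition other_indices :: "nat \<Rightarrow> nat list" where
  "other_indices j = [0..<j] @ [Suc j..<Suc n]"

definition other_u_mat :: "nat \<Rightarrow> 'a mat" where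
  "other_u_mat j = mat_of_cols n (map u (other_indices j))"

lemma length_other_indices: "j < Suc n \<Longrightarrow> length (other_indices j) = n"
  by (simp add: other_indices_def)

lemma set_other_indices: "j < Suc n \<Longrightarrow> set (other_indices j) = {0..<Suc n} - {j}"
  by (auto simp: other_indices_def)

lemma other_u_mat_carrier: "other_u_mat j \<in> carrier_mat n n" if "j < Suc n"
  using mat_of_cols_carrier(1)[of n "map u (other_indices j)"] length_other_indices[OF that]
  by (simp add: other_u_mat_def)

lemma col_other_u_mat:
  assumes "j < Suc n" and "q < n"
  shows "col (other_u_mat j) q = u (other_indices j ! q)"
  using assms nth_mem[of q "other_indices j"] u_carrier
  by (auto simp: other_u_mat_def length_other_indices set_other_indices)

lemma det_other_u_mat_nonzero:
  assumes j: "j < Suc n"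
  shows "det (other_u_mat j) \<noteq> 0"
proof
  let ?U = "other_u_mat j"
  have U: "?U \<in> carrier_mat n n" using other_u_mat_carrier[OF j] .
  assume "det ?U = 0"
  then have "det (transpose_mat ?U) = 0" using det_transpose[OF U] by simp
  then obtain \<phi> where \<phi>: "\<phi> \<in> carrier_vec n" "\<phi> \<noteq> 0\<^sub>v n" "transpose_mat ?U *\<^sub>v \<phi> = 0\<^sub>v n"
    using det_0_iff_vec_prod_zero_field[of "transpose_mat ?U" n] U by auto
  have "u i \<bullet> \<phi> = 0" if i: "i \<in> set (other_indices j)" for i
  proof -
    obtain q where "q < length (other_indices j)" "i = other_indices j ! q"
      using i by (auto simp: in_set_conv_nth)
    then have q: "q < n" "i = other_indices j ! q" using length_other_indices[OF j] by auto
    then have "(transpose_mat ?U *\<^sub>v \<phi>) $ q = u i \<bullet> \<phi>"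
      using U col_other_u_mat[OF j q(1)] by simp
    then show ?thesis using \<phi>(3) q by simp
  qed
  then have "\<forall>i<Suc n. i \<noteq> j \<longrightarrow> transpose_mat (gs ! i) *\<^sub>v \<phi> = \<phi>"
    using transpose_gs_fixes_orthogonal \<phi>(1) set_other_indices[OF j] by auto
  then show False using no_vector_fixed_by_all_but_one_transpose[OF j \<phi>(1,2)] by blast
qed

lemma invariant_subspace_contains_u:
  assumes W: "vec_subspace n W" and i: "i < Suc n" and inv: "\<forall>w\<in>W. gs ! i *\<^sub>v w \<in> W"
    and w: "w \<in> W" "\<psi> i \<bullet> w \<noteq> 0"
  shows "u i \<in> W"
proof -
  have wc: "w \<in> carrier_vec n" using W w by (auto simp: vec_subspace_def)
  have "u i = (1 / (\<psi> i \<bullet> w)) \<cdot>\<^sub>v (gs ! i *\<^sub>v w + (-1) \<cdot>\<^sub>v w)"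
    using gs_mult_vec[OF i wc] wc u_carrier[OF i] w(2) by (auto intro!: eq_vecI)
  then show ?thesis using W inv w(1) by (auto simp: vec_subspace_def)
qed

lemma subspace_full_if_contains_other_u:
  assumes W: "vec_subspace n W" and j: "j < Suc n" and u: "\<forall>i\<in>set (other_indices j). u i \<in> W"
  shows "W = carrier_vec n"
proof -
  have "x \<in> W" if x: "x \<in> carrier_vec n" for x
  proof -
    obtain c where c: "c \<in> carrier_vec n" "other_u_mat j *\<^sub>v c = x"
      using det_nonzero_mult_mat_vec_surj[OF other_u_mat_carrier[OF j]
          det_other_u_mat_nonzero[OF j] x]
      by blast
    have "other_u_mat j *\<^sub>v c \<in> W"
      using vec_subspace_mult_mat_vec[OF W other_u_mat_carrier[OF j] c(1)] u
        col_other_u_mat[OF j] length_other_indices[OF j] by (simp add: nth_mem)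
    then show ?thesis using c by simp
  qed
  then show ?thesis using W by (auto simp: vec_subspace_def)
qed

lemma other_indices_nth_less: "j < Suc n \<Longrightarrow> q < n \<Longrightarrow> other_indices j ! q < Suc n"
  using nth_mem[of q "other_indices j"] by (simp add: length_other_indices set_other_indices)

(* When u at column qr lies in W, these conditions put U c into W and make it fixed by every
   g_i whose u_i lies in W, except the one at column qr. *)
lemma obtain_coefficients_for_fixed_vector:
  assumes j: "j < Suc n" and qr: "qr < n"
  obtains c where "c \<in> carrier_vec n" "c \<noteq> 0\<^sub>v n"
    "\<forall>q<n. q \<noteq> qr \<longrightarrow> u (other_indices j ! q) \<notin> W \<longrightarrow> c $ q = 0"
    "\<forall>q<n. q \<noteq> qr \<longrightarrow> u (other_indices j ! q) \<in> W \<longrightarrow>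
       \<psi> (other_indices j ! q) \<bullet> (other_u_mat j *\<^sub>v c) = 0"
proof -
  let ?U = "other_u_mat j" and ?i = "\<lambda>q. other_indices j ! q"
  define f where
    "f q = (if u (?i q) \<in> W then transpose_mat ?U *\<^sub>v \<psi> (?i q) else unit_vec n q)" for q
  have U: "?U \<in> carrier_mat n n" using other_u_mat_carrier[OF j] .
  have "card ({0..<n} - {qr}) < n" using qr by simp
  moreover have "f ` ({0..<n} - {qr}) \<subseteq> carrier_vec n"
    using U \<psi>_carrier other_indices_nth_less[OF j] by (auto simp: f_def)
  ultimately obtain c where c: "c \<in> carrier_vec n" "c \<noteq> 0\<^sub>v n" "\<forall>q\<in>{0..<n} - {qr}. f q \<bullet> c = 0"
    using exists_nonzero_orthogonal_vec[of "{0..<n} - {qr}" n f] by blast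
  show ?thesis
  proof (rule that[OF c(1,2)]; intro allI impI)
    fix q assume "q < n" "q \<noteq> qr"
    then have fq: "f q \<bullet> c = 0" using c(3) by simp
    show "c $ q = 0" if "u (?i q) \<notin> W"
      using fq that c(1) \<open>q < n\<close> by (simp add: f_def)
    show "\<psi> (?i q) \<bullet> (?U *\<^sub>v c) = 0" if "u (?i q) \<in> W"
      using fq that other_indices_nth_less[OF j \<open>q < n\<close>]
        transpose_vec_mult_scalar[OF U c(1) \<psi>_carrier]
      by (simp add: f_def)
  qed
qed

lemma invariant_subspace_obtain_fixed_vector:
  assumes W: "vec_subspace n W" and inv: "\<forall>i<Suc n. \<forall>w\<in>W. gs ! i *\<^sub>v w \<in> W"
    and r: "r < Suc n" "u r \<in> W" and j: "j < Suc n" "u j \<notin> W"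
  obtains w where "w \<in> W" "w \<noteq> 0\<^sub>v n" "\<forall>i<Suc n. i \<noteq> r \<longrightarrow> gs ! i *\<^sub>v w = w"
proof -
  let ?U = "other_u_mat j" and ?i = "\<lambda>q. other_indices j ! q"
  have U: "?U \<in> carrier_mat n n" using other_u_mat_carrier[OF j(1)] .
  have "r \<in> set (other_indices j)" using r j set_other_indices by auto
  then obtain qr where qr: "qr < n" "?i qr = r"
    using length_other_indices[OF j(1)] by (metis in_set_conv_nth)
  obtain c where c: "c \<in> carrier_vec n" "c \<noteq> 0\<^sub>v n"
    and outside: "\<forall>q<n. q \<noteq> qr \<longrightarrow> u (?i q) \<notin> W \<longrightarrow> c $ q = 0"
    and inside: "\<forall>q<n. q \<noteq> qr \<longrightarrow> u (?i q) \<in> W \<longrightarrow> \<psi> (?i q) \<bullet> (?U *\<^sub>v c) = 0"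
    using obtain_coefficients_for_fixed_vector[OF j(1) qr(1)] by blast
  define w where "w = ?U *\<^sub>v c"
  have w: "w \<in> W" unfolding w_def
  proof (rule vec_subspace_mult_mat_vec[OF W U c(1)], intro allI impI)
    fix q assume "q < n" "c $ q \<noteq> 0"
    then show "col ?U q \<in> W"
      using outside r(2) qr col_other_u_mat[OF j(1)] by (cases "q = qr") auto
  qed
  have "w \<noteq> 0\<^sub>v n"
    using det_0_iff_vec_prod_zero_field[OF U] det_other_u_mat_nonzero[OF j(1)] c
    by (auto simp: w_def)
  moreover have "gs ! i *\<^sub>v w = w" if i: "i < Suc n" "i \<noteq> r" for i
  proof -
    have wc: "w \<in> carrier_vec n" using w W by (auto simp: vec_subspace_def)
    have "\<psi> i \<bullet> w = 0"
    proof (cases "u i \<in> W")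
      case True
      then have "i \<in> set (other_indices j)" using i j set_other_indices by auto
      then obtain q where "q < n" "?i q = i"
        using length_other_indices[OF j(1)] by (metis in_set_conv_nth)
      then show ?thesis using inside True qr i by (auto simp: w_def)
    next
      case False
      then show ?thesis using invariant_subspace_contains_u[OF W i(1)] inv i w by blast
    qed
    then show ?thesis using gs_fixes_orthogonal[OF i(1) wc] by simp
  qed
  ultimately show ?thesis using that w by blast
qed

lemma invariant_subspace_trivial:
  assumes W: "vec_subspace n W" and inv: "\<forall>i<Suc n. \<forall>w\<in>W. gs ! i *\<^sub>v w \<in> W"
  shows "W = {0\<^sub>v n} \<or> W = carrier_vec n"
proof (rule ccontr)
  assume nontrivial: "\<not> ?thesis"
  then obtain w0 where w0: "w0 \<in> W" "w0 \<noteq> 0\<^sub>v n"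
    using W by (auto simp: vec_subspace_def)
  have w0c: "w0 \<in> carrier_vec n" using W w0 by (auto simp: vec_subspace_def)
  obtain r where r: "r < Suc n" "u r \<in> W"
  proof -
    obtain r where "r < Suc n" "gs ! r *\<^sub>v w0 \<noteq> w0"
      using no_vector_fixed_by_all_but_one[of 0, OF _ w0c w0(2)] by auto
    then show ?thesis
      using that invariant_subspace_contains_u[OF W] inv w0 gs_fixes_orthogonal w0c
      by blast
  qed
  have "W \<noteq> carrier_vec n" using nontrivial by blast
  then obtain j where "j \<in> set (other_indices 0)" "u j \<notin> W"
    using subspace_full_if_contains_other_u[OF W, of 0] by blast
  then have j: "j < Suc n" "u j \<notin> W" using set_other_indices[of 0] by auto
  obtain w where "w \<in> W" "w \<noteq> 0\<^sub>v n" "\<forall>i<Suc n. i \<noteq> r \<longrightarrow> gs ! i *\<^sub>v w = w"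
    using invariant_subspace_obtain_fixed_vector[OF W inv r j] by blast
  moreover have "w \<in> carrier_vec n" using \<open>w \<in> W\<close> W by (auto simp: vec_subspace_def)
  ultimately show False using no_vector_fixed_by_all_but_one[OF r(1)] by blast
qed

lemma rank_gs_minus_one:
  assumes i: "i < Suc n"
  shows "vec_space.rank n (gs ! i - 1\<^sub>m n) = 1"
proof -
  have "vec_space.rank n (gs ! i - 1\<^sub>m n) \<le> 1"
    using vec_space.rank_le_1_product_entries[of _ n n "($) (u i)" "($) (\<psi> i)"]
      u_carrier[OF i] \<psi>_carrier[OF i]
    by (simp add: gs_minus_one[OF i] outer_prod_mat_def)
  moreover have "1 \<le> vec_space.rank n (gs ! i - 1\<^sub>m n)"
    using rank_ge_1_if_nonzero[OF minus_carrier_mat gs_minus_one_nonzero[OF i]] by simp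
  ultimately show ?thesis by simp
qed

lemma acts_irreducibly_gen_mat_group: "acts_irreducibly n (gen_mat_group n (set gs))"
  unfolding acts_irreducibly_def
proof (intro conjI allI impI)
  show "0 < n" using dim_pos by simp
  fix W assume "vec_subspace n W \<and> (\<forall>g\<in>gen_mat_group n (set gs). \<forall>w\<in>W. g *\<^sub>v w \<in> W)"
  then show "W = {0\<^sub>v n} \<or> W = carrier_vec n"
    using invariant_subspace_trivial gen_gen[of _ "set gs" n] nth_mem[of _ gs] length_gs by simp
qed

end

lemma obtain_scalar_rank_one_product:
  fixes gs :: "'a :: field mat list"
  assumes "1 \<le> n" and "length gs = Suc n"
    and "\<forall>g\<in>set gs. g \<in> carrier_mat n n \<and> invertible_mat g"
    and "\<forall>g\<in>set gs. vec_space.rank n (g - 1\<^sub>m n) \<le> 1"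
    and "mat_list_prod n gs = \<mu> \<cdot>\<^sub>m 1\<^sub>m n"
    and "\<forall>g\<in>set gs. \<not> eigenvalue g \<mu>"
  obtains u \<psi> where "scalar_rank_one_product n gs \<mu> u \<psi>"
proof -
  have "\<exists>v w. v \<in> carrier_vec n \<and> w \<in> carrier_vec n \<and> gs ! i - 1\<^sub>m n = outer_prod_mat v w"
    if "i < Suc n" for i
    using rank_le_1_imp_outer_prod_mat[of "gs ! i - 1\<^sub>m n" n n] assms(2-4) nth_mem[of i gs] that
    by (metis minus_carrier_mat one_carrier_mat)
  then obtain u \<psi> where u: "\<And>i. i < Suc n \<Longrightarrow> u i \<in> carrier_vec n"
    and \<psi>: "\<And>i. i < Suc n \<Longrightarrow> \<psi> i \<in> carrier_vec n"
    and outer: "\<And>i. i < Suc n \<Longrightarrow> gs ! i - 1\<^sub>m n = outer_prod_mat (u i) (\<psi> i)"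
    by metis
  have det: "\<forall>g\<in>set gs. det g \<noteq> 0"
  proof
    fix g assume "g \<in> set gs"
    then show "det g \<noteq> 0" using assms(3) invertible_mat_det_nonzero[of g n] by simp
  qed
  have "scalar_rank_one_product n gs \<mu> u \<psi>"
  proof
    show "set gs \<subseteq> carrier_mat n n" using assms(3) by blast
  qed (use assms(1,2,5,6) u \<psi> outer det in simp_all)
  then show ?thesis using that by blast
qed

theorem mainTheorem3:
  fixes n :: nat and gs :: "'a :: field mat list" and \<mu> :: 'a
  assumes "n \<ge> 1"
    and "length gs = n + 1"
    and "\<forall>g\<in>set gs. g \<in> carrier_mat n n \<and> invertible_mat g"
    and "\<forall>g\<in>set gs. vec_space.rank n (g - 1\<^sub>m n) \<le> 1"
    and "mat_list_prod n gs = \<mu> \<cdot>\<^sub>m 1\<^sub>m n"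
    and "\<mu> \<noteq> 1"
    and "\<forall>g\<in>set gs. \<not> eigenvalue g \<mu>"
  shows "(\<forall>g\<in>set gs. pseudoreflection n g) \<and> acts_irreducibly n (gen_mat_group n (set gs))"
proof -
  obtain u \<psi> where "scalar_rank_one_product n gs \<mu> u \<psi>"
    using obtain_scalar_rank_one_product[of n gs \<mu>] assms(1-5,7) by auto
  then interpret scalar_rank_one_product n gs \<mu> u \<psi> .
  have "\<forall>g\<in>set gs. pseudoreflection n g"
    using assms(3) rank_gs_minus_one length_gs by (auto simp: pseudoreflection_def in_set_conv_nth)
  then show ?thesis using acts_irreducibly_gen_mat_group by blast
qed

end
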